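(* Let $S$ be the basic spinor representation of $Spin(3)$, realized as a $2$-dimensional irreducible left module over the complex Clifford algebra $\mathbb C_3$ (generated by $e_1,e_2,e_3$ with $e_je_l+e_le_j=-2\delta_{jl}$, $e_{ij}=e_ie_j$), and let $v^{+}\in S$ be nonzero with $-ie_{12}v^{+}=v^{+}$. Put $z=x_1+ix_2$, $\overline z=x_1-ix_2$, $\frac{\partial}{\partial z}=\frac12(\partial_{x_1}-i\partial_{x_2})$, $\frac{\partial}{\partial \overline z}=\frac12(\partial_{x_1}+i\partial_{x_2})$, $X^{-}=2x_3\frac{\partial}{\partial\overline z}- z\frac{\partial}{\partial x_3}$, $\omega^-=\frac12(-e_{31}+ie_{23})$ (acting by left multiplication on $S$-valued polynomials), and $\tilde X^-=X^-+\omega^-$. For $k\in\mathbb N_0$ let $f^k_0=\frac{1}{k!2^k}\overline z^k$, $f^k_j=(X^-)^jf^k_0$ for $0<j\le 2k$, $f^k_{-1}=f^k_{2k+1}=0$, and $F^k_0=\frac{1}{k!2^k}\overline z^kv^+$, $F^k_j=(\tilde X^-)^jF^k_0$ for $0<j\le 2k+1$, $F^k_{-1}=0$. Then: (a) As operators on $S$-valued polynomials, $(\tilde X^-)^j=(X^-)^j+j(X^-)^{j-1}\omega^-$ for all $j\in\mathbb N$. In particular, for $j=0,\dots,2k+1$, $F^k_j=f^k_jv^+ + j f^k_{j-1}\,\omega^-v^+$. (b) $\big[\frac{\partial}{\partial x_3},(\tilde X^-)^j\big]=2j(\tilde X^-)^{j-1}\frac{\partial}{\partial\overline z}$ for all $j\in\mathbb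 N$. In particular, for each $k\in\mathbb N$, $$\frac{\partial F^k_j}{\partial x_3}=\begin{cases} j\,F^{k-1}_{j-1}, & j=1,\dots,2k,\\ 0, & j=0,\,2k+1.\end{cases}$$ (c) $[x_3,(\tilde X^-)^j]=j(\tilde X^-)^{j-1}z$ for all $j\in\mathbb N$ (where $x_3$ and $z$ act by multiplication). In particular, for each $k\in\mathbb N_0$ and $j=0,1,\dots,2k+1$, $$F^{k+1}_{j+1}=x_3F^k_j-jzF^k_{j-1}+\omega^-F^{k+1}_j.$$
   Context: Here $[A,B]=AB-BA$. The polynomials $f^k_j$ ($j=0,\dots,2k$) form the canonical weight basis of the space of complex $k$-homogeneous harmonic polynomials on $\mathbb R^3$, and $F^k_j$ ($j=0,\dots,2k+1$) form the canonical weight basis of the space of $S$-valued $k$-homogeneous polynomials $P$ with $(e_1\partial_{x_1}+e_2\partial_{x_2}+e_3\partial_{x_3})P=0$. *)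

theory Defs
  imports "HOL-Analysis.Analysis" "HOL-Library.Function_Algebras"
begin

text \<open>Polynomials on R^3 with complex coefficients are represented by their
coefficient functions on exponent triples (a,b,c) (monomial x1^a x2^b x3^c).\<close>

type_synonym mono = "nat \<times> nat \<times> nat"
type_synonym spinor = "complex ^ 2"
type_synonym cliff = "complex ^ 2 ^ 2"
type_synonym poly = "mono \<Rightarrow> complex"
type_synonym spoly = "mono \<Rightarrow> spinor"

definition dx1 :: "poly \<Rightarrow> poly" where
  "dx1 p = (\<lambda>(a,b,c). of_nat (a+1) * p (a+1,b,c))"
definition dx2 :: "poly \<Rightarrow> poly" where
  "dx2 p = (\<lambda>(a,b,c). of_nat (b+1) * p (a,b+1,c))"
definition dx3 :: "poly \<Rightarrow> poly" where
  "dx3 p = (\<lambda>(a,b,c). of_nat (c+1) * p (a,b,c+1))"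

definition mx1 :: "poly \<Rightarrow> poly" where
  "mx1 p = (\<lambda>(a,b,c). if a = 0 then 0 else p (a-1,b,c))"
definition mx2 :: "poly \<Rightarrow> poly" where
  "mx2 p = (\<lambda>(a,b,c). if b = 0 then 0 else p (a,b-1,c))"
definition mx3 :: "poly \<Rightarrow> poly" where
  "mx3 p = (\<lambda>(a,b,c). if c = 0 then 0 else p (a,b,c-1))"

definition dzb :: "poly \<Rightarrow> poly" where
  "dzb p = (\<lambda>m. (dx1 p m + \<i> * dx2 p m) / 2)"
definition mz :: "poly \<Rightarrow> poly" where
  "mz p = (\<lambda>m. mx1 p m + \<i> * mx2 p m)"
definition mzb :: "poly \<Rightarrow> poly" where
  "mzb p = (\<lambda>m. mx1 p m - \<i> * mx2 p m)"

definition Xm :: "poly \<Rightarrow> poly" where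
  "Xm p = (\<lambda>m. 2 * mx3 (dzb p) m - mz (dx3 p) m)"

definition pone :: poly where
  "pone = (\<lambda>m. if m = (0,0,0) then 1 else 0)"

definition f0 :: "nat \<Rightarrow> poly" where
  "f0 k = (\<lambda>m. (1 / (fact k * 2 ^ k)) * (mzb ^^ k) pone m)"

definition f :: "nat \<Rightarrow> nat \<Rightarrow> poly" where
  "f k j = (if j \<le> 2 * k then (Xm ^^ j) (f0 k) else (\<lambda>_. 0))"

definition lift :: "(poly \<Rightarrow> poly) \<Rightarrow> spoly \<Rightarrow> spoly" where
  "lift T P = (\<lambda>m. \<chi> i. T (\<lambda>m'. P m' $ i) m)"

definition cl :: "(spinor \<Rightarrow> spinor) \<Rightarrow> spoly \<Rightarrow> spoly" where
  "cl A P = (\<lambda>m. A (P m))"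

definition csm :: "complex \<Rightarrow> spoly \<Rightarrow> spoly" where
  "csm c P = (\<lambda>m. c *s P m)"

definition pv :: "poly \<Rightarrow> spinor \<Rightarrow> spoly" where
  "pv p v = (\<lambda>m. p m *s v)"

definition clifford_gens :: "(nat \<Rightarrow> cliff) \<Rightarrow> bool" where
  "clifford_gens e \<longleftrightarrow> (\<forall>j\<in>{1,2,3}. \<forall>l\<in>{1,2,3}.
      e j ** e l + e l ** e j = (if j = l then mat (-2) else 0))"

definition omega :: "(nat \<Rightarrow> cliff) \<Rightarrow> spinor \<Rightarrow> spinor" where
  "omega e v = (1/2) *s (- ((e 3 ** e 1) *v v) + \<i> *s ((e 2 ** e 3) *v v))"

definition Xt :: "(nat \<Rightarrow> cliff) \<Rightarrow> spoly \<Rightarrow> spoly" where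
  "Xt e P = (\<lambda>m. lift Xm P m + omega e (P m))"

definition F0 :: "nat \<Rightarrow> spinor \<Rightarrow> spoly" where
  "F0 k v = pv (f0 k) v"

definition F :: "(nat \<Rightarrow> cliff) \<Rightarrow> spinor \<Rightarrow> nat \<Rightarrow> nat \<Rightarrow> spoly" where
  "F e v k j = (if j \<le> 2 * k + 1 then (Xt e ^^ j) (F0 k v) else (\<lambda>_. 0))"

definition is_spoly :: "spoly \<Rightarrow> bool" where
  "is_spoly P \<longleftrightarrow> finite {m. P m \<noteq> 0}"

end

theory Submission
  imports Defs
begin

text \<open>The operator \<open>\<omega>\<^sup>-\<close> acts on the spinor factor only, so it commutes with every scalar
operator, and it squares to zero. Hence the binomial expansion of \<open>(X\<^sup>- + \<omega>\<^sup>-)\<^sup>j\<close> stops after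
the linear term, which is (a). The commutators of \<open>d/dx\<^sub>3\<close> and of \<open>x\<^sub>3\<close> with \<open>X\<^sup>- + \<omega>\<^sup>-\<close> are
\<open>2 d/dzbar\<close> and \<open>z\<close>, which commute with \<open>X\<^sup>- + \<omega>\<^sup>-\<close>; for such \<open>D\<close> and \<open>X\<close> one has
\<open>[D, X\<^sup>j] = j X\<^sup>j\<^sup>-\<^sup>1 [D, X]\<close>, which is (b) and (c). Applying these to \<open>F\<^sup>k\<^sub>0\<close>, where
\<open>d/dx\<^sub>3 f\<^sup>k\<^sub>0 = 0\<close>, \<open>d/dzbar f\<^sup>k\<^sup>+\<^sup>1\<^sub>0 = f\<^sup>k\<^sub>0 / 2\<close> and \<open>X\<^sup>- f\<^sup>k\<^sup>+\<^sup>1\<^sub>0 = x\<^sub>3 f\<^sup>k\<^sub>0\<close>, gives the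
recursions. The truncation \<open>f\<^sup>k\<^sub>j = 0\<close> for \<open>j > 2k\<close> agrees with the untruncated powers because
\<open>(X\<^sup>-)\<^sup>2\<^sup>k\<^sup>+\<^sup>1\<close> annihilates \<open>zbar\<^sup>k\<close>.\<close>

lemma funpow_commute: "(\<And>x. T (S x) = S (T x)) \<Longrightarrow> T ((S ^^ n) x) = (S ^^ n) (T x)"
  by (induction n) simp_all

lemmas poly_op_defs = Xm_def dzb_def mz_def mzb_def dx1_def dx2_def dx3_def mx1_def mx2_def mx3_def

lemma Xm_mz_commute: "Xm (mz p) = mz (Xm p)"
  unfolding poly_op_defs by (rule ext, clarsimp split: prod.splits) (auto simp: field_simps)

lemma Xm_mx3: "Xm (mx3 p) = (\<lambda>m. mx3 (Xm p) m - mz p m)"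
  unfolding poly_op_defs by (rule ext, clarsimp split: prod.splits) (auto simp: field_simps)

lemma Xm_mzb: "Xm (mzb p) = (\<lambda>m. mzb (Xm p) m + 2 * mx3 p m)"
  unfolding poly_op_defs by (rule ext, clarsimp split: prod.splits) (auto simp: field_simps)

lemma dx3_Xm: "dx3 (Xm p) = (\<lambda>m. Xm (dx3 p) m + 2 * dzb p m)"
  unfolding poly_op_defs by (rule ext, clarsimp split: prod.splits) (auto simp: field_simps)

lemma dzb_Xm_commute: "dzb (Xm p) = Xm (dzb p)"
  unfolding poly_op_defs by (rule ext, clarsimp split: prod.splits) (auto simp: field_simps)

lemma dx3_mzb_commute: "dx3 (mzb p) = mzb (dx3 p)"
  unfolding poly_op_defs by (rule ext, clarsimp split: prod.splits) (auto simp: field_simps)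

lemma dzb_mzb: "dzb (mzb p) = (\<lambda>m. mzb (dzb p) m + p m)"
  unfolding poly_op_defs by (rule ext, clarsimp split: prod.splits) (auto simp: field_simps)

lemma pone_annihilated: "dx3 pone = (\<lambda>_. 0)" "dzb pone = (\<lambda>_. 0)" "Xm pone = (\<lambda>_. 0)"
  by (auto simp: poly_op_defs pone_def fun_eq_iff)

definition poly_linear :: "(poly \<Rightarrow> poly) \<Rightarrow> bool" where
  "poly_linear T \<longleftrightarrow> (\<forall>p q. T (\<lambda>m. p m + q m) = (\<lambda>m. T p m + T q m)) \<and>
                      (\<forall>c p. T (\<lambda>m. c * p m) = (\<lambda>m. c * T p m))"

lemma poly_linear_add: "poly_linear T \<Longrightarrow> T (\<lambda>m. p m + q m) = (\<lambda>m. T p m + T q m)"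
  and poly_linear_scale: "poly_linear T \<Longrightarrow> T (\<lambda>m. c * p m) = (\<lambda>m. c * T p m)"
  unfolding poly_linear_def by blast+

lemma poly_linear_zero: "poly_linear T \<Longrightarrow> T (\<lambda>_. 0) = (\<lambda>_. 0)"
  using poly_linear_scale[of T 0 "\<lambda>_. 0"] by simp

lemma poly_linear_diff: "poly_linear T \<Longrightarrow> T (\<lambda>m. p m - q m) = (\<lambda>m. T p m - T q m)"
  using poly_linear_add[of T p "\<lambda>m. (-1) * q m"] poly_linear_scale[of T "-1" q] by simp

lemma poly_linear_scale_right: "poly_linear T \<Longrightarrow> T (\<lambda>m. p m * c) = (\<lambda>m. T p m * c)"
  using poly_linear_scale[of T c p] by (simp add: mult.commute)

lemma poly_linear_sum:
  assumes "poly_linear T" "finite S"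
  shows "T (\<lambda>m. \<Sum>i\<in>S. g i m) = (\<lambda>m. \<Sum>i\<in>S. T (g i) m)"
  using assms(2)
  by (induction S rule: finite_induct) (simp_all add: poly_linear_zero[OF assms(1)] poly_linear_add[OF assms(1)])

lemma poly_linear_funpow: "poly_linear T \<Longrightarrow> poly_linear (T ^^ n)"
  by (induction n) (auto simp: poly_linear_def)

lemma poly_linear_ops: "poly_linear dx3" "poly_linear mx3" "poly_linear dzb" "poly_linear mz"
  "poly_linear mzb" "poly_linear Xm"
  by (auto simp: poly_linear_def poly_op_defs fun_eq_iff field_simps)

lemma Xm_pow_linear: "poly_linear (Xm ^^ n)"
  by (rule poly_linear_funpow[OF poly_linear_ops(6)])

lemma Xm_pow_zero: "(Xm ^^ n) (\<lambda>_. 0) = (\<lambda>_. 0)"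
  by (rule poly_linear_zero[OF Xm_pow_linear])

lemma Xm_pow_vanish_mono:
  assumes "(Xm ^^ n) p = (\<lambda>_. 0)" "n \<le> N"
  shows "(Xm ^^ N) p = (\<lambda>_. 0)"
proof -
  have "(Xm ^^ N) p = (Xm ^^ (N - n)) ((Xm ^^ n) p)"
    using assms(2) by (simp flip: funpow_add[unfolded comp_def, THEN fun_cong])
  then show ?thesis by (simp add: assms(1) Xm_pow_zero)
qed

lemma Xm_pow_mx3_vanish: "(Xm ^^ n) p = (\<lambda>_. 0) \<Longrightarrow> (Xm ^^ Suc n) (mx3 p) = (\<lambda>_. 0)"
proof (induction n arbitrary: p)
  case 0
  then show ?case by (simp add: poly_linear_zero poly_linear_ops)
next
  case (Suc n)
  have "(Xm ^^ n) (Xm p) = (\<lambda>_. 0)"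
    using Suc.prems by (simp add: funpow_swap1)
  then have "(Xm ^^ Suc n) (mx3 (Xm p)) = (\<lambda>_. 0)" by (rule Suc.IH)
  moreover have "(Xm ^^ Suc n) (mz p) = (\<lambda>_. 0)"
    using funpow_commute[of mz Xm "Suc n" p] Suc.prems
    by (simp add: Xm_mz_commute poly_linear_zero poly_linear_ops)
  ultimately show ?case
    unfolding funpow_Suc_right[where f=Xm and n="Suc n"] o_apply Xm_mx3
    by (simp add: poly_linear_diff poly_linear_funpow poly_linear_ops del: funpow.simps)
qed

lemma Xm_pow_mzb_vanish: "(Xm ^^ n) p = (\<lambda>_. 0) \<Longrightarrow> (Xm ^^ Suc (Suc n)) (mzb p) = (\<lambda>_. 0)"
proof (induction n arbitrary: p)
  case 0
  then show ?case by (simp add: poly_linear_zero poly_linear_ops)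
next
  case (Suc n)
  have "(Xm ^^ n) (Xm p) = (\<lambda>_. 0)"
    using Suc.prems by (simp add: funpow_swap1)
  then have "(Xm ^^ Suc (Suc n)) (mzb (Xm p)) = (\<lambda>_. 0)" by (rule Suc.IH)
  moreover have "(Xm ^^ Suc (Suc n)) (mx3 p) = (\<lambda>_. 0)"
    by (rule Xm_pow_mx3_vanish[OF Suc.prems])
  ultimately show ?case
    unfolding funpow_Suc_right[where f=Xm and n="Suc (Suc n)"] o_apply Xm_mzb
    by (simp only: poly_linear_add[OF Xm_pow_linear] poly_linear_scale[OF Xm_pow_linear]) simp
qed

lemma Xm_pow_f0_vanish:
  assumes "2 * k < n"
  shows "(Xm ^^ n) (f0 k) = (\<lambda>_. 0)"
proof -
  have "(Xm ^^ Suc (2 * k)) ((mzb ^^ k) pone) = (\<lambda>_. 0)"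
  proof (induction k)
    case 0
    then show ?case by (simp add: pone_annihilated)
  next
    case (Suc k)
    have "(mzb ^^ Suc k) pone = mzb ((mzb ^^ k) pone)" by simp
    then show ?case using Xm_pow_mzb_vanish[OF Suc.IH] by (simp del: funpow.simps)
  qed
  then have "(Xm ^^ n) ((mzb ^^ k) pone) = (\<lambda>_. 0)"
    by (rule Xm_pow_vanish_mono) (use assms in simp)
  then show ?thesis
    unfolding f0_def by (simp only: poly_linear_scale[OF Xm_pow_linear]) simp
qed

lemma f_eq_Xm_pow: "f k j = (Xm ^^ j) (f0 k)"
  by (simp add: f_def Xm_pow_f0_vanish)

lemma dx3_f0: "dx3 (f0 k) = (\<lambda>_. 0)"
proof -
  have "dx3 ((mzb ^^ k) pone) = (\<lambda>_. 0)"
    by (induction k) (simp_all add: pone_annihilated dx3_mzb_commute poly_linear_zero poly_linear_ops)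
  then show ?thesis
    unfolding f0_def by (simp only: poly_linear_scale[OF poly_linear_ops(1)]) simp
qed

lemma dzb_f0: "dzb (f0 (Suc k)) = (\<lambda>m. 1/2 * f0 k m)"
proof -
  have dzb_mzb_pow: "dzb ((mzb ^^ Suc n) pone) = (\<lambda>m. of_nat (Suc n) * (mzb ^^ n) pone m)" for n
  proof (induction n)
    case 0
    then show ?case by (simp add: dzb_mzb pone_annihilated poly_linear_zero poly_linear_ops)
  next
    case (Suc n)
    then show ?case
      by (simp only: funpow.simps(2) o_apply dzb_mzb poly_linear_scale[OF poly_linear_ops(5)])
         (simp add: algebra_simps)
  qed
  have "1 / (fact (Suc k) * 2 ^ Suc k) * of_nat (Suc k) = (1/2 :: complex) * (1 / (fact k * 2 ^ k))"
    by (simp add: fact_Suc field_simps del: of_nat_Suc)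
  then show ?thesis
    unfolding f0_def
    by (simp only: poly_linear_scale[OF poly_linear_ops(3)] dzb_mzb_pow mult.assoc[symmetric])
qed

lemma Xm_f0_Suc: "Xm (f0 (Suc k)) = mx3 (f0 k)"
proof -
  have "mz (\<lambda>_. 0) = (\<lambda>_. 0)" by (rule poly_linear_zero[OF poly_linear_ops(4)])
  then show ?thesis
    unfolding Xm_def dzb_f0 dx3_f0 poly_linear_scale[OF poly_linear_ops(2)] by simp
qed

lemma mat_mult_vec: "(mat c :: 'a::comm_ring_1 ^ 'n ^ 'n) *v x = c *s x"
  by (simp add: vec_eq_iff matrix_vector_mult_def mat_def if_distrib if_distribR sum.delta'
           cong del: if_weak_cong)

lemma clifford_gens_anticommute:
  assumes "clifford_gens e" "j \<in> {1,2,3}" "l \<in> {1,2,3}"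
  shows "e j *v (e l *v y) + e l *v (e j *v y) = (if j = l then - 2 *s y else 0)"
proof -
  have "e j *v (e l *v y) + e l *v (e j *v y) = (e j ** e l + e l ** e j) *v y"
    by (simp add: matrix_vector_mul_assoc matrix_vector_mult_add_rdistrib)
  also have "\<dots> = (if j = l then - 2 *s y else 0)"
    using assms unfolding clifford_gens_def by (auto simp: mat_mult_vec)
  finally show ?thesis .
qed

lemma linear_omega: "Vector_Spaces.linear (*s) (*s) (omega e)"
  by unfold_locales (simp_all add: omega_def vec.add vec.scale vec_eq_iff algebra_simps)

lemma omega_square_zero:
  assumes "clifford_gens e"
  shows "omega e (omega e x) = 0"
proof -
  have square: "e j *v (e j *v y) = - y" if "j \<in> {1,2,3}" for j y
    using clifford_gens_anticommute[OF assms that that, of y] by (simp add: vec_eq_iff)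
  have anti: "e j *v (e l *v y) = - (e l *v (e j *v y))"
    if "j \<in> {1,2,3}" "l \<in> {1,2,3}" "j \<noteq> l" for j l y
    using clifford_gens_anticommute[OF assms that(1,2), of y] that(3)
    by (simp add: eq_neg_iff_add_eq_0)
  have e11: "e 1 *v (e 1 *v y) = - y" and e22: "e 2 *v (e 2 *v y) = - y"
    and e33: "e 3 *v (e 3 *v y) = - y" for y
    by (rule square, simp)+
  have e21: "e 2 *v (e 1 *v y) = - (e 1 *v (e 2 *v y))"
    and e13: "e 1 *v (e 3 *v y) = - (e 3 *v (e 1 *v y))"
    and e23: "e 2 *v (e 3 *v y) = - (e 3 *v (e 2 *v y))" for y
    by (rule anti, simp_all)+
  \<comment> \<open>\<open>\<omega>\<^sup>- = -(1/2) e\<^sub>3 N\<close> with \<open>N = e\<^sub>1 + i e\<^sub>2\<close> isotropic, so \<open>N\<^sup>2 = 0\<close>;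
     and \<open>N\<close> anticommutes with \<open>e\<^sub>3\<close>.\<close>
  define N where "N y = e 1 *v y + \<i> *s (e 2 *v y)" for y
  have omega_eq: "omega e y = (- 1/2) *s (e 3 *v N y)" for y
    unfolding omega_def N_def matrix_vector_mul_assoc[symmetric] e23
    by (simp add: vec.add vec.scale vec.neg vec_eq_iff algebra_simps)
  have N_square: "N (N y) = 0" for y
    unfolding N_def vec.add vec.scale e11 e22 e21
    by (simp add: vec_eq_iff algebra_simps)
  have N_e3: "N (e 3 *v y) = - (e 3 *v N y)" for y
    unfolding N_def e13 e23
    by (simp add: vec.add vec.scale vec.neg vec_eq_iff algebra_simps)
  have N_scale: "N (c *s y) = c *s N y" for c y
    unfolding N_def by (simp add: vec.scale vec_eq_iff algebra_simps)
  show ?thesis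
    by (simp only: omega_eq N_scale vec.scale vec.neg N_e3 e33 N_square) simp
qed

lemma csm_0 [simp]: "csm 0 P = 0" and csm_1 [simp]: "csm 1 P = P"
  and csm_zero [simp]: "csm c 0 = 0"
  and csm_csm: "csm a (csm b P) = csm (a * b) P"
  and csm_add_left: "csm (a + b) P = csm a P + csm b P"
  by (simp_all add: csm_def fun_eq_iff vec_eq_iff algebra_simps)

lemma pv_0 [simp]: "pv (\<lambda>_. 0) v = 0"
  by (simp add: pv_def fun_eq_iff)

lemma pv_scale: "pv (\<lambda>m. c * p m) v = csm c (pv p v)"
  by (simp add: pv_def csm_def fun_eq_iff vec_eq_iff)

definition spoly_linear :: "(spoly \<Rightarrow> spoly) \<Rightarrow> bool" where
  "spoly_linear T \<longleftrightarrow> (\<forall>P Q. T (P + Q) = T P + T Q) \<and> (\<forall>c P. T (csm c P) = csm c (T P))"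

lemma spoly_linear_add: "spoly_linear T \<Longrightarrow> T (P + Q) = T P + T Q"
  and spoly_linear_csm: "spoly_linear T \<Longrightarrow> T (csm c P) = csm c (T P)"
  unfolding spoly_linear_def by blast+

lemma spoly_linear_zero: "spoly_linear T \<Longrightarrow> T 0 = 0"
  using spoly_linear_csm[of T 0 0] by simp

lemma spoly_linear_funpow: "spoly_linear T \<Longrightarrow> spoly_linear (T ^^ n)"
  by (induction n) (auto simp: spoly_linear_def)

lemma funpow_commutator:
  assumes X: "spoly_linear X"
    and D: "\<And>P. D (X P) = X (D P) + C P" and C: "\<And>P. C (X P) = X (C P)"
  shows "D ((X ^^ j) P) - (X ^^ j) (D P) = csm (of_nat j) ((X ^^ (j - 1)) (C P))"
proof -
  have "D ((X ^^ Suc j) P) = (X ^^ Suc j) (D P) + csm (of_nat (Suc j)) ((X ^^ j) (C P))" for j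
  proof (induction j)
    case 0
    show ?case using D by simp
  next
    case (Suc j)
    have "D ((X ^^ Suc (Suc j)) P) = X (D ((X ^^ Suc j) P)) + (X ^^ Suc j) (C P)"
      unfolding funpow.simps(2)[where f=X and n="Suc j"] o_apply D
      by (simp only: funpow_commute[of C X, OF C])
    also have "\<dots> = (X ^^ Suc (Suc j)) (D P) + csm (of_nat (Suc j)) ((X ^^ Suc j) (C P))
                    + (X ^^ Suc j) (C P)"
      by (simp only: Suc.IH spoly_linear_add[OF X] spoly_linear_csm[OF X]) (simp only: funpow.simps(2) o_apply)
    finally show ?case by (simp only: of_nat_Suc[of "Suc j"] csm_add_left csm_1 ac_simps)
  qed
  then show ?thesis by (cases j) simp_all
qed

lemma funpow_add_square_zero:
  assumes L: "spoly_linear L" and W: "spoly_linear W"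
    and commute: "\<And>P. W (L P) = L (W P)" and square_zero: "\<And>P. W (W P) = 0"
  shows "((\<lambda>P. L P + W P) ^^ j) P = (L ^^ j) P + csm (of_nat j) ((L ^^ (j - 1)) (W P))"
proof (induction j)
  case 0
  show ?case by simp
next
  case (Suc j)
  have "W ((L ^^ (j - 1)) (W P)) = 0"
    by (simp add: funpow_commute[of W L, OF commute] square_zero spoly_linear_zero[OF spoly_linear_funpow[OF L]])
  moreover have "csm (of_nat j) (L ((L ^^ (j - 1)) (W P))) = csm (of_nat j) ((L ^^ j) (W P))"
    by (cases j) simp_all
  ultimately show ?case
    by (simp only: funpow.simps(2) o_apply Suc.IH spoly_linear_add[OF L] spoly_linear_add[OF W]
          spoly_linear_csm[OF L] spoly_linear_csm[OF W] funpow_commute[of W L, OF commute]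
          of_nat_Suc csm_add_left csm_1 csm_zero add_0_left diff_Suc_1 ac_simps)
qed

lemma spoly_linear_lift:
  assumes "poly_linear T"
  shows "spoly_linear (lift T)"
  unfolding spoly_linear_def lift_def csm_def
  by (simp add: poly_linear_add[OF assms] poly_linear_scale[OF assms] fun_eq_iff vec_eq_iff)

lemma spoly_linear_cl: "Vector_Spaces.linear (*s) (*s) A \<Longrightarrow> spoly_linear (cl A)"
  by (simp add: spoly_linear_def cl_def csm_def vec.linear_add vec.linear_scale fun_eq_iff)

lemma lift_pv:
  assumes "poly_linear T"
  shows "lift T (pv p v) = pv (T p) v"
  by (simp add: lift_def pv_def poly_linear_scale_right[OF assms] fun_eq_iff vec_eq_iff)

lemma funpow_lift_pv: "poly_linear T \<Longrightarrow> (lift T ^^ n) (pv p v) = pv ((T ^^ n) p) v"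
  by (induction n) (simp_all add: lift_pv poly_linear_funpow)

lemma cl_pv: "Vector_Spaces.linear (*s) (*s) A \<Longrightarrow> cl A (pv p v) = pv p (A v)"
  by (simp add: cl_def pv_def vec.linear_scale fun_eq_iff)

lemma lift_cl_commute:
  assumes T: "poly_linear T" and A: "Vector_Spaces.linear (*s) (*s) A"
  shows "lift T (cl A P) = cl A (lift T P)"
proof -
  have "lift T (cl A P) m $ j = A (lift T P m) $ j" for m j
  proof -
    have "(\<lambda>m'. A (P m') $ j) = (\<lambda>m'. \<Sum>i\<in>UNIV. P m' $ i * A (axis i 1) $ j)"
      by (rule ext, rule linear_componentwise[OF A])
    then have "lift T (cl A P) m $ j = T (\<lambda>m'. \<Sum>i\<in>UNIV. P m' $ i * A (axis i 1) $ j) m"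
      by (simp add: lift_def cl_def)
    also have "\<dots> = (\<Sum>i\<in>UNIV. T (\<lambda>m'. P m' $ i * A (axis i 1) $ j) m)"
      by (simp add: poly_linear_sum[OF T])
    also have "\<dots> = (\<Sum>i\<in>UNIV. lift T P m $ i * A (axis i 1) $ j)"
      by (simp add: poly_linear_scale_right[OF T] lift_def)
    also have "\<dots> = A (lift T P m) $ j"
      by (rule linear_componentwise[OF A, symmetric])
    finally show ?thesis .
  qed
  then show ?thesis by (simp add: cl_def fun_eq_iff vec_eq_iff)
qed

lemma Xt_eq: "Xt e = (\<lambda>P. lift Xm P + cl (omega e) P)"
  by (simp add: Xt_def cl_def fun_eq_iff)

lemma spoly_linear_Xt: "spoly_linear (Xt e)"
  using spoly_linear_lift[OF poly_linear_ops(6)] spoly_linear_cl[OF linear_omega]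
  by (simp add: spoly_linear_def Xt_eq csm_def fun_eq_iff vec_eq_iff algebra_simps)

lemma lift_Xt:
  assumes "poly_linear T" and commutator: "\<And>p. T (Xm p) = (\<lambda>m. Xm (T p) m + S p m)"
  shows "lift T (Xt e P) = Xt e (lift T P) + lift S P"
proof -
  have "lift T (lift Xm P) = lift Xm (lift T P) + lift S P"
    by (simp add: lift_def commutator fun_eq_iff vec_eq_iff)
  then show ?thesis
    by (simp add: Xt_eq spoly_linear_add[OF spoly_linear_lift[OF assms(1)]]
                  lift_cl_commute[OF assms(1) linear_omega] ac_simps)
qed

lemma lift_Xt_commute:
  assumes "poly_linear T" "\<And>p. T (Xm p) = Xm (T p)"
  shows "lift T (Xt e P) = Xt e (lift T P)"
  using lift_Xt[OF assms(1), of "\<lambda>_ _. 0"] assms(2) by (simp add: lift_def fun_eq_iff vec_eq_iff)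

lemma cl_omega_Xt_commute: "cl (omega e) (Xt e P) = Xt e (cl (omega e) P)"
  by (simp add: Xt_eq spoly_linear_add[OF spoly_linear_cl[OF linear_omega]]
                lift_cl_commute[OF poly_linear_ops(6) linear_omega])

lemma Xt_pow:
  assumes "clifford_gens e"
  shows "(Xt e ^^ j) P = (lift Xm ^^ j) P + csm (of_nat j) ((lift Xm ^^ (j - 1)) (cl (omega e) P))"
  unfolding Xt_eq
proof (rule funpow_add_square_zero)
  show "spoly_linear (lift Xm)" by (rule spoly_linear_lift[OF poly_linear_ops(6)])
  show "spoly_linear (cl (omega e))" by (rule spoly_linear_cl[OF linear_omega])
  show "cl (omega e) (lift Xm Q) = lift Xm (cl (omega e) Q)" for Q
    by (rule lift_cl_commute[OF poly_linear_ops(6) linear_omega, symmetric])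
  show "cl (omega e) (cl (omega e) Q) = 0" for Q
    by (simp add: cl_def omega_square_zero[OF assms] fun_eq_iff)
qed

lemma Xt_pow_F0:
  assumes "clifford_gens e"
  shows "(Xt e ^^ j) (F0 k v) = pv (f k j) v + csm (of_nat j) (pv (f k (j - 1)) (omega e v))"
  by (simp add: Xt_pow[OF assms] F0_def funpow_lift_pv cl_pv linear_omega f_eq_Xm_pow poly_linear_ops
           del: funpow.simps)

lemma F_eq_Xt_pow:
  assumes "clifford_gens e"
  shows "F e v k j = (Xt e ^^ j) (F0 k v)"
proof (cases "j \<le> 2 * k + 1")
  case False
  then have "\<not> j \<le> 2 * k" "\<not> j - 1 \<le> 2 * k" by linarith+
  then show ?thesis
    using False by (simp add: F_def Xt_pow_F0[OF assms] f_def fun_eq_iff)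
qed (simp add: F_def)

lemma F_eq_pv:
  assumes "clifford_gens e"
  shows "F e v k j = pv (f k j) v + csm (of_nat j) (pv (f k (j - 1)) (omega e v))"
  by (simp only: F_eq_Xt_pow[OF assms] Xt_pow_F0[OF assms])

lemma dx3_Xt_pow:
  "lift dx3 ((Xt e ^^ j) P) - (Xt e ^^ j) (lift dx3 P) = csm (2 * of_nat j) ((Xt e ^^ (j - 1)) (lift dzb P))"
proof -
  have "lift dx3 ((Xt e ^^ j) P) - (Xt e ^^ j) (lift dx3 P)
        = csm (of_nat j) ((Xt e ^^ (j - 1)) (csm 2 (lift dzb P)))"
  proof (rule funpow_commutator[OF spoly_linear_Xt])
    show "lift dx3 (Xt e Q) = Xt e (lift dx3 Q) + csm 2 (lift dzb Q)" for Q
      using lift_Xt[OF poly_linear_ops(1), of "\<lambda>p m. 2 * dzb p m"] dx3_Xm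
      by (simp add: lift_def csm_def fun_eq_iff vec_eq_iff)
    show "csm 2 (lift dzb (Xt e Q)) = Xt e (csm 2 (lift dzb Q))" for Q
      by (simp add: lift_Xt_commute[OF poly_linear_ops(3) dzb_Xm_commute] spoly_linear_csm[OF spoly_linear_Xt])
  qed
  then show ?thesis
    by (simp add: spoly_linear_csm[OF spoly_linear_funpow[OF spoly_linear_Xt]] csm_csm mult.commute)
qed

lemma dx3_F_Suc:
  assumes "clifford_gens e"
  shows "lift dx3 (F e v (Suc k) j) = csm (of_nat j) (F e v k (j - 1))"
proof -
  have "lift dx3 (F0 (Suc k) v) = 0"
    by (simp add: F0_def lift_pv poly_linear_ops dx3_f0)
  moreover have "lift dzb (F0 (Suc k) v) = csm (1/2) (F0 k v)"
    by (simp only: F0_def lift_pv[OF poly_linear_ops(3)] dzb_f0 pv_scale)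
  ultimately show ?thesis
    using dx3_Xt_pow[where e=e and j=j and P="F0 (Suc k) v"]
    by (simp add: F_eq_Xt_pow[OF assms] spoly_linear_zero[OF spoly_linear_funpow[OF spoly_linear_Xt]]
                  spoly_linear_csm[OF spoly_linear_funpow[OF spoly_linear_Xt]] csm_csm)
qed

lemma dx3_F:
  assumes "clifford_gens e" "1 \<le> k" "j \<le> 2 * k + 1"
  shows "lift dx3 (F e v k j) = (if 1 \<le> j \<and> j \<le> 2 * k
                                  then csm (of_nat j) (F e v (k - 1) (j - 1)) else 0)"
proof -
  have derivative: "lift dx3 (F e v k j) = csm (of_nat j) (F e v (k - 1) (j - 1))"
    using dx3_F_Suc[OF assms(1), of v "k - 1" j] assms(2) by simp
  have vanish: "F e v (k - 1) (2 * k) = 0"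
    using assms(2) by (simp add: F_def fun_eq_iff)
  consider "j = 0" | "1 \<le> j \<and> j \<le> 2 * k" | "j = 2 * k + 1"
    using assms(3) by linarith
  then show ?thesis
    by cases (use derivative vanish in simp_all)
qed

lemma mx3_Xt_pow:
  "lift mx3 ((Xt e ^^ j) P) - (Xt e ^^ j) (lift mx3 P) = csm (of_nat j) ((Xt e ^^ (j - 1)) (lift mz P))"
proof (rule funpow_commutator[OF spoly_linear_Xt])
  show "lift mx3 (Xt e Q) = Xt e (lift mx3 Q) + lift mz Q" for Q
    by (rule lift_Xt[OF poly_linear_ops(2)]) (simp add: Xm_mx3 fun_eq_iff)
  show "lift mz (Xt e Q) = Xt e (lift mz Q)" for Q
    by (rule lift_Xt_commute[OF poly_linear_ops(4) Xm_mz_commute[symmetric]])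
qed

lemma F_Suc_Suc:
  assumes "clifford_gens e"
  shows "F e v (k + 1) (j + 1) = lift mx3 (F e v k j) - csm (of_nat j) (lift mz (F e v k (j - 1)))
                                 + cl (omega e) (F e v (k + 1) j)"
proof -
  have "Xt e (F0 (k + 1) v) = lift mx3 (F0 k v) + cl (omega e) (F0 (k + 1) v)"
    by (simp add: Xt_eq F0_def lift_pv poly_linear_ops Xm_f0_Suc)
  then have "F e v (k + 1) (j + 1)
             = (Xt e ^^ j) (lift mx3 (F0 k v)) + cl (omega e) ((Xt e ^^ j) (F0 (k + 1) v))"
    by (simp add: F_eq_Xt_pow[OF assms] funpow_Suc_right
                  spoly_linear_add[OF spoly_linear_funpow[OF spoly_linear_Xt]]
                  funpow_commute[of "cl (omega e)" "Xt e", OF cl_omega_Xt_commute] del: funpow.simps)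
  moreover have "(Xt e ^^ (j - 1)) (lift mz (F0 k v)) = lift mz ((Xt e ^^ (j - 1)) (F0 k v))"
    by (rule funpow_commute[symmetric],
        rule lift_Xt_commute[OF poly_linear_ops(4) Xm_mz_commute[symmetric]])
  ultimately show ?thesis
    using mx3_Xt_pow[where e=e and j=j and P="F0 k v"] by (simp add: F_eq_Xt_pow[OF assms] algebra_simps)
qed

theorem theorem3p2:
  fixes e :: "nat \<Rightarrow> cliff" and v :: spinor
  assumes "clifford_gens e"
    and "v \<noteq> 0"
    and "- \<i> *s ((e 1 ** e 2) *v v) = v"
  shows
    "(\<forall>j\<ge>1. \<forall>P. is_spoly P \<longrightarrow>
        (Xt e ^^ j) P = (lift Xm ^^ j) P + csm (of_nat j) ((lift Xm ^^ (j - 1)) (cl (omega e) P)))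
     \<and> (\<forall>k j. j \<le> 2 * k + 1 \<longrightarrow>
        F e v k j = pv (f k j) v + csm (of_nat j) (pv (f k (j - 1)) (omega e v)))
     \<and> (\<forall>j\<ge>1. \<forall>P. is_spoly P \<longrightarrow>
        lift dx3 ((Xt e ^^ j) P) - (Xt e ^^ j) (lift dx3 P)
          = csm (2 * of_nat j) ((Xt e ^^ (j - 1)) (lift dzb P)))
     \<and> (\<forall>k\<ge>1. \<forall>j. j \<le> 2 * k + 1 \<longrightarrow>
        lift dx3 (F e v k j) = (if 1 \<le> j \<and> j \<le> 2 * k
                                then csm (of_nat j) (F e v (k - 1) (j - 1)) else 0))
     \<and> (\<forall>j\<ge>1. \<forall>P. is_spoly P \<longrightarrow>
        lift mx3 ((Xt e ^^ j) P) - (Xt e ^^ j) (lift mx3 P)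
          = csm (of_nat j) ((Xt e ^^ (j - 1)) (lift mz P)))
     \<and> (\<forall>k j. j \<le> 2 * k + 1 \<longrightarrow>
        F e v (k + 1) (j + 1) = lift mx3 (F e v k j) - csm (of_nat j) (lift mz (F e v k (j - 1)))
                                + cl (omega e) (F e v (k + 1) j))"
  by (intro conjI allI impI Xt_pow[OF assms(1)] F_eq_pv[OF assms(1)] dx3_Xt_pow dx3_F[OF assms(1)]
        mx3_Xt_pow F_Suc_Suc[OF assms(1)])

end
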